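(* Let $T:X\rightrightarrows X^*$ be a multivalued operator. If $\operatorname{co}(\mathrm{dom}(T))\subset\mathrm{dom}(T^\rho)$, then $T$ is pseudomonotone. In particular, if $\mathrm{dom}(T^\rho)=X$, then $T$ is pseudomonotone.
   Context: $X$ is a real Banach space with dual $X^*$ and pairing $\langle x,x^*\rangle=x^*(x)$. A multivalued operator $T:X\rightrightarrows X^*$ is identified with its graph $T\subset X\times X^*$; $\mathrm{dom}(T)=\{x: \exists x^*,\ (x,x^* )\in T\}$; $\operatorname{co}$ denotes the convex hull. For $(x,x^* ),(y,y^* )\in X\times X^*$, write $(x,x^* )\sim_p(y,y^* )$ if either $\min\{\langle x-y,y^*\rangle,\langle y-x,x^*\rangle\}<0$ or $\langle x-y,y^*\rangle=\langle y-x,x^*\rangle=0$. The pseudomonotone polar of $T$ is $T^\rho=\{(x,x^* )\in X\times X^*: (x,x^* )\sim_p(y,y^* )\ \forall (y,y^* )\in T\}$. $T$ is pseudomonotone if for all $(x,x^* ),(y,y^* )\in T$, $\langle y-x,x^*\rangle\ge0$ implies $\langle y-x,y^*\rangle\ge0$. *)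

theory Defs
  imports "HOL-Analysis.Analysis"
begin

text \<open>The dual X* of a real Banach space X is modelled as the space of bounded
  linear functionals 'a \<Rightarrow>L real; the pairing is blinfun_apply.\<close>

type_synonym 'a mvop = "('a \<times> ('a \<Rightarrow>\<^sub>L real)) set"

definition op_dom :: "'a mvop \<Rightarrow> 'a set" where
  "op_dom T = {x. \<exists>x'. (x, x') \<in> T}"

definition sim_p :: "('a::real_normed_vector \<times> ('a \<Rightarrow>\<^sub>L real)) \<Rightarrow> ('a \<times> ('a \<Rightarrow>\<^sub>L real)) \<Rightarrow> bool" where
  "sim_p p q = (let (x, x') = p; (y, y') = q in
     min (blinfun_apply y' (x - y)) (blinfun_apply x' (y - x)) < 0 \<or>
     (blinfun_apply y' (x - y) = 0 \<and> blinfun_apply x' (y - x) = 0))"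

definition pm_polar :: "('a::real_normed_vector) mvop \<Rightarrow> 'a mvop" where
  "pm_polar T = {p. \<forall>q\<in>T. sim_p p q}"

definition pseudomonotone :: "('a::real_normed_vector) mvop \<Rightarrow> bool" where
  "pseudomonotone T = (\<forall>x x' y y'. (x, x') \<in> T \<longrightarrow> (y, y') \<in> T \<longrightarrow>
     blinfun_apply x' (y - x) \<ge> 0 \<longrightarrow> blinfun_apply y' (y - x) \<ge> 0)"

end

theory Submission
  imports Defs
begin

text \<open>Take \<open>(x,x'), (y,y') \<in> T\<close> with \<open>x'(y-x) \<ge> 0\<close> and a point \<open>z\<close> strictly between
  \<open>x\<close> and \<open>y\<close> carrying some \<open>(z,z') \<in> T\<^sup>\<rho>\<close>. Both pairs \<open>(z,z') \<sim>\<^sub>p (x,x')\<close> and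
  \<open>(z,z') \<sim>\<^sub>p (y,y')\<close> say that the sign of \<open>z'\<close> along the segment is passed on to the
  other endpoint: the first forbids \<open>z'(y-x) < 0\<close>, and then the second forces
  \<open>y'(y-x) \<ge> 0\<close>.\<close>

lemma sim_p_iff:
  "sim_p (x, x') (y, y') \<longleftrightarrow>
     (x' (y - x) \<ge> 0 \<longrightarrow> y' (y - x) \<ge> 0) \<and> (x' (y - x) > 0 \<longrightarrow> y' (y - x) > 0)"
proof -
  have "y' (x - y) = - y' (y - x)"
    by (metis blinfun.minus_right minus_diff_eq)
  then show ?thesis
    unfolding sim_p_def by (auto simp: min_def)
qed

lemma sim_p_segment_transfer:
  fixes x y :: "'a::real_normed_vector"
  assumes "sim_p (z, z') (x, x')" and "sim_p (z, z') (y, y')"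
    and z: "z = x + t *\<^sub>R (y - x)" and t: "0 < t" "t < 1"
    and "x' (y - x) \<ge> 0"
  shows "y' (y - x) \<ge> 0"
proof -
  have "x - z = (- t) *\<^sub>R (y - x)" and "y - z = (1 - t) *\<^sub>R (y - x)"
    using z by (simp_all add: algebra_simps)
  then have "z' (x - z) = - t * z' (y - x)" "x' (x - z) = - t * x' (y - x)"
      "z' (y - z) = (1 - t) * z' (y - x)" "y' (y - z) = (1 - t) * y' (y - x)"
    by (simp_all add: blinfun.scaleR_right blinfun.minus_right)
  with assms(1,2) have
      from_x: "- t * z' (y - x) > 0 \<longrightarrow> - t * x' (y - x) > 0" and
      to_y: "(1 - t) * z' (y - x) \<ge> 0 \<longrightarrow> (1 - t) * y' (y - x) \<ge> 0"
    by (simp_all add: sim_p_iff)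
  have "z' (y - x) \<ge> 0"
    using from_x t \<open>x' (y - x) \<ge> 0\<close> by (auto simp: mult_less_0_iff)
  then show ?thesis
    using to_y t by (simp add: zero_le_mult_iff)
qed

lemma pseudomonotone_if_convex_hull_dom_subset:
  assumes "convex hull (op_dom T) \<subseteq> op_dom (pm_polar T)"
  shows "pseudomonotone T"
  unfolding pseudomonotone_def
proof (intro allI impI)
  fix x x' y y'
  assume xT: "(x, x') \<in> T" and yT: "(y, y') \<in> T" and "x' (y - x) \<ge> 0"
  define z where "z = (1/2::real) *\<^sub>R x + (1/2::real) *\<^sub>R y"
  have "x \<in> op_dom T" "y \<in> op_dom T"
    using xT yT by (auto simp: op_dom_def)
  then have "z \<in> convex hull (op_dom T)"
    unfolding z_def by (intro convexD[OF convex_convex_hull]) (auto intro: hull_inc)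
  with assms obtain z' where "(z, z') \<in> pm_polar T"
    by (auto simp: op_dom_def)
  then have "sim_p (z, z') (x, x')" "sim_p (z, z') (y, y')"
    using xT yT by (auto simp: pm_polar_def)
  then show "y' (y - x) \<ge> 0"
    by (rule sim_p_segment_transfer[where t = "1/2"])
      (use \<open>x' (y - x) \<ge> 0\<close> in \<open>auto simp: z_def algebra_simps simp flip: scaleR_add_left\<close>)
qed

theorem mainTheorem8:
  fixes T :: "('a::banach) mvop"
  shows "(convex hull (op_dom T) \<subseteq> op_dom (pm_polar T) \<longrightarrow> pseudomonotone T) \<and>
         (op_dom (pm_polar T) = UNIV \<longrightarrow> pseudomonotone T)"
  using pseudomonotone_if_convex_hull_dom_subset[of T] by auto

end
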